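(* For real $a$ and $t>0$, $$K_0(t)\,\operatorname{ber}(a\sqrt{t})=\int_0^{\infty}(1+y^2)^{-1/2}J_0\!\left(\frac14\frac{a^2}{1+y^2}\right)\cosh\!\left(\frac14\frac{a^2y}{1+y^2}\right)\cos(ty)\,dy .$$
   Context: $K_0$ is the Macdonald function and $J_0$ the Bessel function of order $0$. The Kelvin function $\operatorname{ber}(x)=\sum_{k\ge0}\frac{(-1)^k (x/2)^{4k}}{((2k)!)^2}$. *)

theory Defs
  imports "HOL-Analysis.Analysis"
begin

definition besselJ0 :: "real \<Rightarrow> real" where
  "besselJ0 x = (\<Sum>k. (-1)^k * (x/2)^(2*k) / (fact k)^2)"

definition besselK0 :: "real \<Rightarrow> real" where
  "besselK0 t = integral {0..} (\<lambda>u. exp (- t * cosh u))"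

definition ber :: "real \<Rightarrow> real" where
  "ber x = (\<Sum>k. (-1)^k * (x/2)^(4*k) / (fact (2*k))^2)"

end

theory Submission
  imports Defs "HOL-Complex_Analysis.Complex_Analysis" "HOL-Real_Asymp.Real_Asymp"
begin

(* Write A = 1 + y^2 and c = a^2/4. Multiplying the power series of J_0(c/A) and cosh(c y/A)
  expresses the integrand as the sum over j of c^(2j) P_(2j)(y) cos(t y), where
  P_k(y) = q_k(y) A^(-k-1/2) for explicit polynomials q_k (bessel_kernel and bessel_kernel_poly
  below). These kernels satisfy P_k' = -(k+1)^2 P_(k+1), so two integrations by parts give

    int_0^oo cos(t y) P_(k+2)(y) dy = - t^2 / ((k+1)^2 (k+2)^2) * int_0^oo cos(t y) P_k(y) dy,

  while int_0^oo cos(t y) A^(-1/2) dy = K_0(t): substitute y = sinh x and move the path of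
  integration of exp(-t cosh z) from the real axis to the line Im z = pi/2. Hence the j-th term
  integrates to (-1)^j (c t)^(2j) / ((2j)!)^2 K_0(t), and these terms sum to K_0(t) ber(a sqrt t).
  Integrating termwise is justified by dominated convergence, as |P_k| <= 2^k/k! A^(-1) for k >= 1. *)

section \<open>Improper integrals over a half-line\<close>

lemma atLeast_not_cbox: "\<not> (\<exists>c d. {a::real..} = cbox c d)"
proof
  assume "\<exists>c d. {a::real..} = cbox c d"
  then obtain c d where "{a..} = cbox c d" by blast
  moreover have "max a (d + 1) \<in> {a..}" by simp
  ultimately show False by auto
qed

lemma has_integral_restrict_atLeast:
  fixes f :: "real \<Rightarrow> 'b::banach"
  assumes "f integrable_on {a..b}" and "c \<le> a" and "a \<le> b"
  shows "((\<lambda>x. if x \<in> {a..} then f x else 0) has_integral integral {a..b} f) (cbox c b)"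
  unfolding cbox_interval
proof -
  have "((\<lambda>x. if x \<in> {a..b} then f x else 0) has_integral integral {a..b} f) {c..b}"
    using assms by (subst has_integral_restrict) auto
  then show "((\<lambda>x. if x \<in> {a..} then f x else 0) has_integral integral {a..b} f) {c..b}"
    by (rule has_integral_eq[rotated]) (use assms in auto)
qed

lemma tendsto_integral_atLeastAtMost:
  fixes f :: "real \<Rightarrow> 'b::banach"
  assumes "(f has_integral L) {a..}"
  shows "((\<lambda>b. integral {a..b} f) \<longlongrightarrow> L) at_top"
proof (rule tendstoI)
  fix e :: real assume "e > 0"
  then obtain B where B: "\<forall>c d. ball 0 B \<subseteq> cbox c d \<longrightarrow>
      (\<exists>z. ((\<lambda>x. if x \<in> {a..} then f x else 0) has_integral z) (cbox c d) \<and> norm (z - L) < e)"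
    using has_integral_altD[OF assms atLeast_not_cbox] by blast
  have "dist (integral {a..b} f) L < e" if "b \<ge> max a B" for b
  proof -
    have "ball 0 B \<subseteq> cbox (min a (-B)) b"
      using that by (auto simp: subset_eq dist_real_def cbox_interval)
    then obtain z where z: "((\<lambda>x. if x \<in> {a..} then f x else 0) has_integral z) (cbox (min a (-B)) b)"
      and "norm (z - L) < e"
      using B by blast
    moreover have "f integrable_on {a..b}"
      using has_integral_integrable[OF assms] by (rule integrable_on_subinterval) auto
    then have "z = integral {a..b} f"
      using has_integral_unique[OF z has_integral_restrict_atLeast] that by simp
    ultimately show ?thesis by (simp add: dist_norm)
  qed
  then show "\<forall>\<^sub>F b in at_top. dist (integral {a..b} f) L < e"
    using eventually_ge_at_top[of "max a B"] by (auto elim: eventually_mono)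
qed

lemma has_integral_atLeast_of_tendsto:
  fixes f :: "real \<Rightarrow> 'b::banach"
  assumes int: "\<And>b. f integrable_on {a..b}"
    and lim: "((\<lambda>b. integral {a..b} f) \<longlongrightarrow> L) at_top"
  shows "(f has_integral L) {a..}"
proof (rule has_integral_alt[THEN iffD2], simp only: atLeast_not_cbox if_False, intro allI impI)
  fix e :: real assume "e > 0"
  with lim obtain B0 where B0: "\<And>b. b \<ge> B0 \<Longrightarrow> dist (integral {a..b} f) L < e"
    by (auto simp: tendsto_iff eventually_at_top_linorder)
  define B where "B = max B0 \<bar>a\<bar> + 1"
  have "\<exists>z. ((\<lambda>x. if x \<in> {a..} then f x else 0) has_integral z) (cbox c d) \<and> norm (z - L) < e"
    if "ball 0 B \<subseteq> cbox c d" for c d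
  proof -
    have "a \<in> ball 0 B" "B - 1 \<in> ball 0 B" by (simp_all add: B_def dist_real_def)
    with that have "a \<in> {c..d}" "B - 1 \<in> {c..d}" by (auto simp: cbox_interval)
    then have "c \<le> a" "a \<le> d" "B0 \<le> d" by (auto simp: B_def)
    then show ?thesis
      using has_integral_restrict_atLeast[OF int] B0[of d] by (auto simp: dist_norm)
  qed
  then show "\<exists>B>0. \<forall>c d. ball 0 B \<subseteq> cbox c d \<longrightarrow>
      (\<exists>z. ((\<lambda>x. if x \<in> {a..} then f x else 0) has_integral z) (cbox c d) \<and> norm (z - L) < e)"
    by (intro exI[of _ B]) (auto simp: B_def)
qed

lemma has_integral_atLeast_iff_tendsto:
  fixes f :: "real \<Rightarrow> 'b::banach"
  assumes "\<And>b. f integrable_on {a..b}"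
  shows "(f has_integral L) {a..} \<longleftrightarrow> ((\<lambda>b. integral {a..b} f) \<longlongrightarrow> L) at_top"
  using tendsto_integral_atLeastAtMost has_integral_atLeast_of_tendsto[OF assms] by blast

lemma has_integral_sums_dominated:
  fixes f :: "nat \<Rightarrow> 'n::euclidean_space \<Rightarrow> 'm::euclidean_space"
  assumes "\<And>k. (f k has_integral I k) S" and "h integrable_on S" and "summable b"
    and "\<And>k. 0 \<le> b k" and "\<And>x. x \<in> S \<Longrightarrow> 0 \<le> h x"
    and "\<And>k x. x \<in> S \<Longrightarrow> norm (f k x) \<le> b k * h x"
    and "\<And>x. x \<in> S \<Longrightarrow> (\<lambda>k. f k x) sums F x" and "I sums J"
  shows "(F has_integral J) S"
proof (rule has_integral_dominated_convergence)
  show "((\<lambda>x. \<Sum>k<N. f k x) has_integral (\<Sum>k<N. I k)) S" for N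
    using assms(1) by (rule has_integral_sum[OF finite_lessThan])
  show "(\<lambda>x. suminf b * h x) integrable_on S"
    using assms(2) by (rule integrable_on_mult_right)
  show "\<forall>x\<in>S. norm (\<Sum>k<N. f k x) \<le> suminf b * h x" for N
  proof
    fix x assume "x \<in> S"
    have "norm (\<Sum>k<N. f k x) \<le> (\<Sum>k<N. b k * h x)"
      by (intro norm_sum[THEN order_trans] sum_mono assms(6) \<open>x \<in> S\<close>)
    also have "\<dots> = (\<Sum>k<N. b k) * h x" by (simp add: sum_distrib_right)
    also have "\<dots> \<le> suminf b * h x"
      using assms(3,4,5) \<open>x \<in> S\<close> by (intro mult_right_mono sum_le_suminf) auto
    finally show "norm (\<Sum>k<N. f k x) \<le> suminf b * h x" .
  qed
  show "\<forall>x\<in>S. (\<lambda>N. \<Sum>k<N. f k x) \<longlonglongrightarrow> F x"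
    using assms(7) by (simp add: sums_def)
  show "(\<lambda>N. \<Sum>k<N. I k) \<longlonglongrightarrow> J"
    using assms(8) by (simp add: sums_def)
qed

lemma fundamental_theorem_of_calculus_real:
  fixes F f :: "real \<Rightarrow> real"
  assumes "a \<le> b" and "\<And>x. x \<in> {a..b} \<Longrightarrow> (F has_real_derivative f x) (at x)"
  shows "(f has_integral (F b - F a)) {a..b}"
  using assms(1)
  by (rule fundamental_theorem_of_calculus)
     (use assms(2) in \<open>auto simp: has_real_derivative_iff_has_vector_derivative[symmetric]
        intro: has_field_derivative_at_within\<close>)

lemma one_plus_square_pos: "0 < 1 + (y::real)^2"
  by (simp add: add_pos_nonneg)

lemma has_integral_inverse_one_plus_square: "((\<lambda>y::real. 1 / (1 + y^2)) has_integral pi/2) {0..}"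
proof -
  have int: "(\<lambda>y::real. 1 / (1 + y^2)) integrable_on {0..b}" for b
    using one_plus_square_pos
    by (intro integrable_continuous_interval continuous_intros) (auto simp: less_imp_neq[symmetric])
  have arctan_eq: "integral {0..b} (\<lambda>y::real. 1 / (1 + y^2)) = arctan b" if "b \<ge> 0" for b
  proof -
    have "((\<lambda>y::real. 1 / (1 + y^2)) has_integral arctan b - arctan 0) {0..b}"
      using that by (intro fundamental_theorem_of_calculus_real)
         (auto intro!: derivative_eq_intros DERIV_arctan[THEN DERIV_cong] simp: divide_inverse)
    then show ?thesis by (simp add: integral_unique)
  qed
  have "\<forall>\<^sub>F b in at_top. arctan b = integral {0..b} (\<lambda>y::real. 1 / (1 + y^2))"
    using eventually_ge_at_top[of 0] by eventually_elim (rule arctan_eq[symmetric])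
  with tendsto_arctan_at_top have "((\<lambda>b. integral {0..b} (\<lambda>y::real. 1 / (1 + y^2))) \<longlongrightarrow> pi/2) at_top"
    by (rule Lim_transform_eventually)
  then show ?thesis by (rule has_integral_atLeast_of_tendsto[OF int])
qed

section \<open>The Macdonald function as a cosine integral\<close>

lemma real_le_cosh: "x \<le> cosh (x::real)"
proof (cases "x \<ge> 0")
  case True
  then have "x \<le> sinh x"
    using real_le_x_sinh[OF True] by (simp add: sinh_field_def exp_minus)
  then show ?thesis using sinh_le_cosh_real[of x] by linarith
next
  case False
  then show ?thesis using cosh_real_pos[of x] by linarith
qed

lemma integrable_exp_minus_cosh:
  fixes t :: real
  assumes "t > 0"
  shows "(\<lambda>u. exp (- t * cosh u)) integrable_on {0..}"
proof (rule measurable_bounded_by_integrable_imp_integrable)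
  show "(\<lambda>u. exp (- t * cosh u)) \<in> borel_measurable (lebesgue_on {0..})"
    by (intro continuous_imp_measurable_on_sets_lebesgue continuous_intros) auto
  show "(\<lambda>u. exp (- t * u)) integrable_on {0..}"
    using integrable_on_exp_minus_to_infinity[OF assms] by simp
  show "norm (exp (- t * cosh u)) \<le> exp (- t * u)" for u
    using real_le_cosh[of u] assms by simp
qed auto

lemma half_le_sin:
  fixes w :: real
  assumes "0 \<le> w" and "w \<le> pi/2"
  shows "w/2 \<le> sin w"
proof (cases "w \<le> pi/3")
  case True
  have "(\<lambda>x. sin x - x/2) 0 \<le> (\<lambda>x. sin x - x/2) w"
  proof (rule DERIV_nonneg_imp_nondecreasing[OF assms(1)])
    fix x assume x: "0 \<le> x" "x \<le> w"
    have "cos (pi/3) \<le> cos x"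
      using x True by (intro cos_monotone_0_pi_le) auto
    then have "cos x - 1/2 \<ge> 0" by (simp add: cos_60)
    moreover have "DERIV (\<lambda>x. sin x - x/2) x :> cos x - 1/2"
      by (auto intro!: derivative_eq_intros)
    ultimately show "\<exists>y. DERIV (\<lambda>x. sin x - x/2) x :> y \<and> y \<ge> 0" by blast
  qed
  then show ?thesis by simp
next
  case False
  have "sin (pi/3) \<le> sin w"
    using False assms by (intro sin_monotone_2pi_le) auto
  moreover have "sqrt 3 \<ge> 1.7"
    by (rule real_le_rsqrt) (simp add: power2_eq_square)
  moreover have "pi \<le> 3.2" using pi_approx by simp
  ultimately show ?thesis using assms unfolding sin_60 by linarith
qed

lemma cosh_Complex: "cosh (Complex x y) = Complex (cosh x * cos y) (sinh x * sin y)"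
proof -
  have "- Complex x y = Complex (-x) (-y)" by (simp add: complex_eq_iff)
  then show ?thesis
    by (simp add: cosh_field_def sinh_field_def complex_eq_iff Re_exp Im_exp field_simps)
qed

lemma has_contour_integral_linepath_same_Im_iff:
  fixes f :: "complex \<Rightarrow> complex"
  assumes "a < b"
  shows "(f has_contour_integral I) (linepath (Complex a c) (Complex b c)) \<longleftrightarrow>
         ((\<lambda>x. f (Complex x c)) has_integral I) {a..b}"
proof -
  have shift: "linepath (Complex a c) (Complex b c) x = linepath (of_real a) (of_real b) x + \<i> * of_real c" for x
    by (simp add: linepath_def complex_eq_iff scaleR_conv_of_real algebra_simps)
  have "Complex b c - Complex a c = of_real b - of_real a"
    by (simp add: complex_eq_iff)
  then have "(f has_contour_integral I) (linepath (Complex a c) (Complex b c)) \<longleftrightarrow>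
        ((\<lambda>z. f (z + \<i> * of_real c)) has_contour_integral I) (linepath (of_real a) (of_real b))"
    by (simp only: has_contour_integral_linepath shift)
  also have "\<dots> \<longleftrightarrow> ((\<lambda>x. f (of_real x + \<i> * of_real c)) has_integral I) {a..b}"
    using assms by (subst has_contour_integral_linepath_Reals_iff) auto
  also have "(\<lambda>x. f (of_real x + \<i> * of_real c)) = (\<lambda>x. f (Complex x c))"
    by (simp add: Complex_eq)
  finally show ?thesis .
qed

lemma Cauchy_theorem_rectangle_integrals:
  fixes f :: "complex \<Rightarrow> complex"
  assumes "f holomorphic_on UNIV" and "U > 0" and "V > 0"
  shows "integral {0..U} (\<lambda>x. f (Complex x 0)) + \<i> * integral {0..V} (\<lambda>y. f (Complex U y)) =
         integral {0..U} (\<lambda>x. f (Complex x V)) + \<i> * integral {0..V} (\<lambda>y. f (Complex 0 y))"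
proof -
  have cont: "continuous_on UNIV f"
    using assms(1) by (rule holomorphic_on_imp_continuous_on)
  have horizontal: "(f has_contour_integral integral {0..U} (\<lambda>x. f (Complex x c)))
      (linepath (Complex 0 c) (Complex U c))" for c
  proof -
    have "(\<lambda>x. f (Complex x c)) integrable_on {0..U}"
      unfolding Complex_eq
      by (intro integrable_continuous_interval continuous_on_compose2[OF cont] continuous_intros) auto
    then show ?thesis
      using assms(2) by (subst has_contour_integral_linepath_same_Im_iff) auto
  qed
  have vertical: "(f has_contour_integral \<i> * integral {0..V} (\<lambda>y. f (Complex c y)))
      (linepath (Complex c 0) (Complex c V))" for c
  proof -
    have "(\<lambda>y. f (Complex c y)) integrable_on {0..V}"
      unfolding Complex_eq
      by (intro integrable_continuous_interval continuous_on_compose2[OF cont] continuous_intros) auto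
    then show ?thesis
      using assms(3) by (subst has_contour_integral_linepath_same_Re_iff[where c = c and a = 0 and b = V]) auto
  qed
  let ?I = "\<lambda>c. integral {0..U} (\<lambda>x. f (Complex x c))"
  let ?J = "\<lambda>c. \<i> * integral {0..V} (\<lambda>y. f (Complex c y))"
  let ?rectangle = "linepath (Complex 0 0) (Complex U 0) +++ linepath (Complex U 0) (Complex U V)
      +++ reversepath (linepath (Complex 0 V) (Complex U V)) +++ reversepath (linepath (Complex 0 0) (Complex 0 V))"
  have "(f has_contour_integral ?I 0 + (?J U + (- ?I V + - ?J 0))) ?rectangle"
    by (intro has_contour_integral_join has_contour_integral_reversepath horizontal vertical
        valid_path_join valid_path_linepath valid_path_reversepath) auto
  moreover have "(f has_contour_integral 0) ?rectangle"
    by (rule Cauchy_theorem_convex_simple[OF assms(1)]) auto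
  ultimately have "?I 0 + (?J U + (- ?I V + - ?J 0)) = 0"
    by (rule has_contour_integral_unique)
  then show ?thesis by (simp add: algebra_simps)
qed

lemma integral_cos_sinh_eq:
  fixes t U :: real
  assumes "U > 0"
  shows "integral {0..U} (\<lambda>x. cos (t * sinh x)) =
         integral {0..U} (\<lambda>x. exp (- t * cosh x)) - Im (integral {0..pi/2} (\<lambda>v. exp (- of_real t * cosh (Complex U v))))"
proof -
  define f :: "complex \<Rightarrow> complex" where "f z = exp (- of_real t * cosh z)" for z
  have holo: "f holomorphic_on UNIV"
    unfolding f_def by (intro holomorphic_intros analytic_imp_holomorphic analytic_intros)
  have Re_f: "Re (f (Complex x y)) = exp (- t * cosh x * cos y) * cos (t * sinh x * sin y)"
    and Im_f: "Im (f (Complex x y)) = - exp (- t * cosh x * cos y) * sin (t * sinh x * sin y)" for x y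
    by (simp_all add: f_def cosh_Complex Re_exp Im_exp mult.assoc)
  have int: "(\<lambda>x. f (Complex x c)) integrable_on {a..b}" "(\<lambda>y. f (Complex c y)) integrable_on {a..b}" for a b c
    unfolding f_def Complex_eq by (intro integrable_continuous_interval continuous_intros)+
  have Re_Im_integral: "Re (integral {a..b} g) = integral {a..b} (\<lambda>x. Re (g x))"
      "Im (integral {a..b} g) = integral {a..b} (\<lambda>x. Im (g x))"
    if "g integrable_on {a..b}" for a b and g :: "real \<Rightarrow> complex"
    using has_integral_Re[OF integrable_integral[OF that]] has_integral_Im[OF integrable_integral[OF that]]
    by (simp_all add: integral_unique)
  have "Re (integral {0..U} (\<lambda>x. f (Complex x 0)) + \<i> * integral {0..pi/2} (\<lambda>v. f (Complex U v))) =
        Re (integral {0..U} (\<lambda>x. f (Complex x (pi/2))) + \<i> * integral {0..pi/2} (\<lambda>v. f (Complex 0 v)))"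
    using Cauchy_theorem_rectangle_integrals[OF holo assms] by simp
  then show ?thesis
    unfolding f_def[symmetric] by (simp add: Re_Im_integral int Re_f Im_f)
qed

lemma norm_integral_exp_cosh_vertical_le:
  fixes t U :: real
  assumes "t > 0"
  shows "norm (integral {0..pi/2} (\<lambda>v. exp (- of_real t * cosh (Complex U v)))) \<le> 2 / (t * cosh U)"
proof -
  define M where "M = t * cosh U"
  have "M > 0" unfolding M_def using assms by simp
  have majorant: "((\<lambda>v. exp (- M * (pi/2 - v) / 2)) has_integral 2/M - 2/M * exp (- M * pi / 4)) {0..pi/2}"
  proof -
    have "((\<lambda>v. exp (- M * (pi/2 - v) / 2)) has_integral
        (\<lambda>v. 2/M * exp (- M * (pi/2 - v) / 2)) (pi/2) - (\<lambda>v. 2/M * exp (- M * (pi/2 - v) / 2)) 0) {0..pi/2}"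
      using \<open>M > 0\<close> by (intro fundamental_theorem_of_calculus_real)
         (auto intro!: derivative_eq_intros simp: field_simps)
    then show ?thesis by (simp add: field_simps)
  qed
  have "norm (integral {0..pi/2} (\<lambda>v. exp (- of_real t * cosh (Complex U v))))
      \<le> integral {0..pi/2} (\<lambda>v. exp (- M * (pi/2 - v) / 2))"
  proof (rule integral_norm_bound_integral)
    show "(\<lambda>v. exp (- of_real t * cosh (Complex U v))) integrable_on {0..pi/2}"
      unfolding Complex_eq by (intro integrable_continuous_interval continuous_intros)
    show "(\<lambda>v. exp (- M * (pi/2 - v) / 2)) integrable_on {0..pi/2}"
      using majorant by blast
  next
    fix v assume v: "v \<in> {0..pi/2}"
    have "(pi/2 - v) / 2 \<le> cos v"
      using half_le_sin[of "pi/2 - v"] v by (simp add: sin_cos_eq)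
    then have "M * ((pi/2 - v) / 2) \<le> M * cos v"
      using \<open>M > 0\<close> by (intro mult_left_mono) auto
    then show "norm (exp (- of_real t * cosh (Complex U v))) \<le> exp (- M * (pi/2 - v) / 2)"
      by (simp add: cosh_Complex M_def)
  qed
  also have "\<dots> = 2/M - 2/M * exp (- M * pi / 4)"
    using majorant by (rule integral_unique)
  also have "\<dots> \<le> 2/M" using \<open>M > 0\<close> by simp
  finally show ?thesis unfolding M_def .
qed

lemma tendsto_integral_cos_sinh:
  fixes t :: real
  assumes "t > 0"
  shows "((\<lambda>U. integral {0..U} (\<lambda>x. cos (t * sinh x))) \<longlongrightarrow> besselK0 t) at_top"
proof -
  let ?R = "\<lambda>U. integral {0..U} (\<lambda>x. exp (- t * cosh x))"
  let ?W = "\<lambda>U. integral {0..pi/2} (\<lambda>v. exp (- of_real t * cosh (Complex U v)))"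
  have "(?R \<longlongrightarrow> besselK0 t) at_top"
    unfolding besselK0_def
    by (intro tendsto_integral_atLeastAtMost integrable_integral integrable_exp_minus_cosh assms)
  moreover have "((\<lambda>U. Im (?W U)) \<longlongrightarrow> 0) at_top"
  proof (rule Lim_null_comparison)
    show "\<forall>\<^sub>F U in at_top. norm (Im (?W U)) \<le> 2 / (t * cosh U)"
      using abs_Im_le_cmod norm_integral_exp_cosh_vertical_le[OF assms]
      by (auto intro: always_eventually order_trans)
    show "((\<lambda>U. 2 / (t * cosh U)) \<longlongrightarrow> 0) at_top"
      by (intro tendsto_divide_0[OF tendsto_const] filterlim_at_top_imp_at_infinity
          filterlim_tendsto_pos_mult_at_top[OF tendsto_const assms cosh_real_at_top])
  qed
  ultimately have "((\<lambda>U. ?R U - Im (?W U)) \<longlongrightarrow> besselK0 t - 0) at_top"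
    by (rule tendsto_diff)
  moreover have "\<forall>\<^sub>F U in at_top. ?R U - Im (?W U) = integral {0..U} (\<lambda>x. cos (t * sinh x))"
    using eventually_gt_at_top[of 0] by eventually_elim (simp add: integral_cos_sinh_eq)
  ultimately show ?thesis by (simp add: tendsto_cong)
qed

lemma integral_cos_mult_powr_eq_integral_cos_sinh:
  fixes t B :: real
  assumes "B \<ge> 0"
  shows "integral {0..B} (\<lambda>y. cos (t * y) * (1 + y^2) powr (-1/2)) =
         integral {0..arsinh B} (\<lambda>x. cos (t * sinh x))"
proof -
  let ?f = "\<lambda>y::real. cos (t * y) * (1 + y^2) powr (-1/2)"
  have "arsinh B \<ge> 0" using sinh_real_nonneg_iff[of "arsinh B"] assms by simp
  have subst: "((\<lambda>x. cosh x *\<^sub>R ?f (sinh x)) has_integral integral {sinh 0..sinh (arsinh B)} ?f) {0..arsinh B}"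
  proof (rule has_integral_substitution)
    show "sinh ` {0..arsinh B} \<subseteq> {0..B}"
    proof clarify
      fix x assume "x \<in> {0..arsinh B}"
      then have "sinh 0 \<le> sinh x" "sinh x \<le> sinh (arsinh B)"
        by (simp_all only: atLeastAtMost_iff sinh_real_le_iff)
      then show "sinh x \<in> {0..B}" by simp
    qed
    show "continuous_on {0..B} ?f"
      using one_plus_square_pos by (intro continuous_intros) (auto simp: less_imp_neq[symmetric])
  qed (use \<open>arsinh B \<ge> 0\<close> assms in \<open>auto intro!: derivative_eq_intros\<close>)
  have "(\<lambda>x. cosh x *\<^sub>R ?f (sinh x)) = (\<lambda>x. cos (t * sinh x))"
  proof
    fix x :: real
    have "1 + sinh x ^ 2 = cosh x ^ 2" by (simp add: cosh_square_eq)
    then show "cosh x *\<^sub>R ?f (sinh x) = cos (t * sinh x)"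
      by (simp add: powr_minus_divide powr_half_sqrt)
  qed
  then show ?thesis using integral_unique[OF subst] by simp
qed

lemma has_integral_cos_mult_powr_besselK0:
  fixes t :: real
  assumes "t > 0"
  shows "((\<lambda>y. cos (t * y) * (1 + y^2) powr (-1/2)) has_integral besselK0 t) {0..}"
proof -
  have "((\<lambda>B. integral {0..arsinh B} (\<lambda>x. cos (t * sinh x))) \<longlongrightarrow> besselK0 t) at_top"
    using filterlim_compose[OF tendsto_integral_cos_sinh[OF assms] arsinh_real_at_top] by (simp add: o_def)
  moreover have "\<forall>\<^sub>F B in at_top. integral {0..arsinh B} (\<lambda>x. cos (t * sinh x)) =
      integral {0..B} (\<lambda>y. cos (t * y) * (1 + y^2) powr (-1/2))"
    using eventually_ge_at_top[of 0]
    by eventually_elim (rule integral_cos_mult_powr_eq_integral_cos_sinh[symmetric])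
  ultimately have "((\<lambda>B. integral {0..B} (\<lambda>y. cos (t * y) * (1 + y^2) powr (-1/2))) \<longlongrightarrow> besselK0 t) at_top"
    by (rule Lim_transform_eventually)
  moreover have "(\<lambda>y. cos (t * y) * (1 + y^2) powr (-1/2)) integrable_on {0..B}" for B
    using one_plus_square_pos
    by (intro integrable_continuous_interval continuous_intros) (auto simp: less_imp_neq[symmetric])
  ultimately show ?thesis by (rule has_integral_atLeast_of_tendsto[rotated])
qed

section \<open>Power series\<close>

lemma sums_even_iff:
  fixes f :: "nat \<Rightarrow> 'a::real_normed_vector"
  assumes "\<And>n. odd n \<Longrightarrow> f n = 0"
  shows "(\<lambda>j. f (2 * j)) sums s \<longleftrightarrow> f sums s"
proof (rule sums_mono_reindex)
  show "strict_mono (\<lambda>j::nat. 2 * j)" by (simp add: strict_mono_def)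
  show "f n = 0" if "n \<notin> range (\<lambda>j. 2 * j)" for n
    using that assms by (metis evenE rangeI)
qed

lemma cosh_even_sums: "(\<lambda>j. x^(2 * j) / fact (2 * j)) sums cosh (x::real)"
proof -
  have scaleR: "x^n /\<^sub>R fact n = x^n / fact n" for n
    by (simp add: divide_inverse_commute)
  show ?thesis
    using cosh_converges[of x] sums_even_iff[of "\<lambda>n. if even n then x^n / fact n else 0"]
    unfolding scaleR by simp
qed

definition besselJ0_coeff :: "nat \<Rightarrow> real" where
  "besselJ0_coeff i = (if even i then (-1)^(i div 2) / (4^(i div 2) * (fact (i div 2))^2) else 0)"

lemma besselJ0_coeff_odd: "odd i \<Longrightarrow> besselJ0_coeff i = 0"
  by (simp add: besselJ0_coeff_def)

lemma besselJ0_coeff_Suc_Suc: "(real k + 2)^2 * besselJ0_coeff (Suc (Suc k)) = - besselJ0_coeff k"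
proof (cases "even k")
  case True
  then obtain m where k: "k = 2 * m" by (rule evenE)
  have "(real k + 2)^2 = 4 * (real m + 1)^2" by (simp add: k power2_eq_square algebra_simps)
  moreover have "(fact (Suc m) :: real)^2 = (real m + 1)^2 * (fact m)^2"
    by (simp add: power_mult_distrib add.commute)
  ultimately have denom: "4 * 4^m * (fact (Suc m))^2 = (real k + 2)^2 * (4^m * (fact m)^2)"
    by (simp only: mult_ac)
  have "besselJ0_coeff (Suc (Suc k)) = (-1)^Suc m / (4 * 4^m * (fact (Suc m))^2)"
    by (simp add: besselJ0_coeff_def k)
  also have "\<dots> = - besselJ0_coeff k / (real k + 2)^2"
    unfolding denom by (simp add: besselJ0_coeff_def k)
  finally show ?thesis by simp
qed (simp add: besselJ0_coeff_def)

lemma abs_besselJ0_coeff_le: "\<bar>besselJ0_coeff i\<bar> \<le> 1 / fact i"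
proof (cases "even i")
  case True
  then obtain m where i: "i = 2 * m" by (rule evenE)
  have "fact (2 * m) = fact m * fact m * real (2 * m choose m)"
    by (simp add: binomial_fact mult_2)
  also have "\<dots> \<le> fact m * fact m * 4^m"
    using binomial_le_pow2[of "2 * m" m]
    by (intro mult_left_mono) (simp_all add: power_mult flip: of_nat_le_iff)
  finally have "fact (2 * m) \<le> (4::real)^m * (fact m)^2"
    by (simp add: power2_eq_square mult_ac)
  then show ?thesis
    by (simp add: besselJ0_coeff_def i abs_mult power_abs abs_divide frac_le)
qed (simp add: besselJ0_coeff_def)

lemma summable_norm_besselJ0_coeff: "summable (\<lambda>i. norm (besselJ0_coeff i * u^i))"
proof (rule summable_comparison_test')
  show "summable (\<lambda>i. \<bar>u\<bar>^i / fact i)"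
    using summable_exp[of "\<bar>u\<bar>"] by (simp only: divide_inverse_commute)
  show "norm (norm (besselJ0_coeff i * u^i)) \<le> \<bar>u\<bar>^i / fact i" for i
    using abs_besselJ0_coeff_le[of i]
    by (simp add: abs_mult power_abs divide_inverse mult_right_mono mult.commute)
qed

lemma besselJ0_sums: "(\<lambda>i. besselJ0_coeff i * u^i) sums besselJ0 u"
proof -
  have "(\<lambda>j. besselJ0_coeff (2 * j) * u^(2 * j)) sums (\<Sum>i. besselJ0_coeff i * u^i)"
    using summable_norm_besselJ0_coeff[THEN summable_norm_cancel] by (subst sums_even_iff) (auto simp: besselJ0_coeff_odd)
  moreover have "besselJ0_coeff (2 * j) * u^(2 * j) = (-1)^j * (u/2)^(2 * j) / (fact j)^2" for j
    by (simp add: besselJ0_coeff_def power_divide power_mult)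
  ultimately show ?thesis
    using summable_norm_besselJ0_coeff[THEN summable_norm_cancel] by (simp add: besselJ0_def sums_iff)
qed

lemma ber_sums: "(\<lambda>k. (-1)^k * (x/2)^(4 * k) / (fact (2 * k))^2) sums ber x"
proof -
  have "summable (\<lambda>k. (-1)^k * (x/2)^(4 * k) / (fact (2 * k))^2)"
  proof (rule summable_comparison_test')
    show "summable (\<lambda>k. ((x/2)^4)^k / fact k)"
      using summable_exp[of "(x/2)^4"] by (simp only: divide_inverse_commute)
    fix k
    have "fact k \<le> (fact (2 * k) :: real)" by (intro fact_mono) simp
    also have "\<dots> \<le> (fact (2 * k))^2"
      by (simp add: power2_eq_square fact_ge_1)
    finally have "((x/2)^4)^k / (fact (2 * k))^2 \<le> ((x/2)^4)^k / fact k"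
      by (intro divide_left_mono) simp_all
    moreover have "norm ((-1)^k * (x/2)^(4 * k) / (fact (2 * k))^2) = ((x/2)^4)^k / (fact (2 * k))^2"
      by (simp add: abs_mult power_mult)
    ultimately show "norm ((-1)^k * (x/2)^(4 * k) / (fact (2 * k))^2) \<le> ((x/2)^4)^k / fact k"
      by simp
  qed
  then show ?thesis by (simp add: ber_def summable_sums)
qed

lemma ber_two_sqrt_sums:
  fixes x :: real
  assumes "x \<ge> 0"
  shows "(\<lambda>j. (-1)^j * x^(2 * j) / (fact (2 * j))^2) sums ber (2 * sqrt x)"
proof -
  have "(2 * sqrt x / 2)^(4 * j) = x^(2 * j)" for j
  proof -
    have "(2 * sqrt x / 2)^(4 * j) = (sqrt x ^ 2)^(2 * j)"
      by (simp add: power_mult[symmetric])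
    then show ?thesis using assms by simp
  qed
  then show ?thesis using ber_sums[of "2 * sqrt x"] by simp
qed

lemma ber_abs: "ber \<bar>x\<bar> = ber x"
proof -
  have "(\<bar>x\<bar> / 2)^(4 * k) = (x / 2)^(4 * k)" for k
    using power_even_abs[of "4 * k" "x / 2"] by simp
  then show ?thesis by (simp add: ber_def)
qed

section \<open>The kernels\<close>

(* The coefficient of s^k in J_0(s) exp(y s). *)
definition bessel_kernel_poly :: "nat \<Rightarrow> real \<Rightarrow> real" where
  "bessel_kernel_poly k y = (\<Sum>i\<le>k. besselJ0_coeff i * y^(k - i) / fact (k - i))"

lemma bessel_kernel_poly_0 [simp]: "bessel_kernel_poly 0 y = 1"
  by (simp add: bessel_kernel_poly_def besselJ0_coeff_def)

lemma bessel_kernel_poly_1: "bessel_kernel_poly (Suc 0) y = y"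
  by (simp add: bessel_kernel_poly_def besselJ0_coeff_def)

lemma bessel_kernel_poly_at_0: "bessel_kernel_poly k 0 = besselJ0_coeff k"
  by (cases k) (simp_all add: bessel_kernel_poly_def Suc_diff_le)

lemma has_real_derivative_bessel_kernel_poly_Suc:
  "(bessel_kernel_poly (Suc k) has_real_derivative bessel_kernel_poly k y) (at y)"
proof -
  have "(bessel_kernel_poly (Suc k) has_real_derivative
      (\<Sum>i\<le>Suc k. besselJ0_coeff i * (real (Suc k - i) * y^(Suc k - i - 1)) / fact (Suc k - i))) (at y)"
    unfolding bessel_kernel_poly_def[abs_def] by (auto intro!: derivative_eq_intros simp: mult_ac)
  moreover have "besselJ0_coeff i * (real (Suc k - i) * y^(Suc k - i - 1)) / fact (Suc k - i) =
      besselJ0_coeff i * y^(k - i) / fact (k - i)" if "i \<le> k" for i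
  proof -
    have "Suc k - i = Suc (k - i)" using that by (simp add: Suc_diff_le)
    then show ?thesis by (simp add: fact_Suc del: of_nat_Suc)
  qed
  ultimately show ?thesis by (simp add: bessel_kernel_poly_def)
qed

lemma bessel_kernel_poly_Suc_Suc:
  "(real k + 2)^2 * bessel_kernel_poly (Suc (Suc k)) y =
     (2 * real k + 3) * y * bessel_kernel_poly (Suc k) y - (1 + y^2) * bessel_kernel_poly k y"
proof -
  define r where "r k y = (real k + 2)^2 * bessel_kernel_poly (Suc (Suc k)) y
      - (2 * real k + 3) * y * bessel_kernel_poly (Suc k) y + (1 + y^2) * bessel_kernel_poly k y" for k y
  have "r k y = 0" for y
  proof (induction k arbitrary: y)
    case 0
    have "bessel_kernel_poly 2 y = y^2 / 2 - 1/4"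
      by (simp add: bessel_kernel_poly_def besselJ0_coeff_def numeral_2_eq_2)
    then show ?case by (simp add: r_def bessel_kernel_poly_1 numeral_2_eq_2 algebra_simps power2_eq_square)
  next
    case (Suc m)
    have "(r (Suc m) has_real_derivative r m x) (at x)" for x
      unfolding r_def[abs_def]
      by (auto intro!: derivative_eq_intros has_real_derivative_bessel_kernel_poly_Suc
          simp: algebra_simps power2_eq_square)
    then have "r (Suc m) y = r (Suc m) 0"
      using Suc.IH by (metis DERIV_isconst_all)
    also have "r (Suc m) 0 = 0"
      using besselJ0_coeff_Suc_Suc[of "Suc m"] by (simp add: r_def bessel_kernel_poly_at_0 algebra_simps)
    finally show ?case .
  qed
  then show ?thesis by (simp add: r_def algebra_simps)
qed

lemma besselJ0_mult_cosh_sums: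
  "(\<lambda>j. bessel_kernel_poly (2 * j) y * s^(2 * j)) sums (besselJ0 s * cosh (y * s))"
proof -
  define a where "a i = besselJ0_coeff i * s^i" for i
  define b where "b n = (if even n then (y * s)^n / fact n else 0)" for n
  have "summable (\<lambda>n. norm (b n))"
  proof (rule summable_comparison_test')
    show "summable (\<lambda>n. \<bar>y * s\<bar>^n / fact n)"
      using summable_exp[of "\<bar>y * s\<bar>"] by (simp only: divide_inverse_commute)
  qed (simp add: b_def power_abs)
  moreover have "b sums cosh (y * s)"
  proof -
    have scaleR: "(y * s)^n /\<^sub>R fact n = (y * s)^n / fact n" for n
      by (simp add: divide_inverse_commute)
    show ?thesis using cosh_converges[of "y * s"] unfolding scaleR b_def .
  qed
  ultimately have "(\<lambda>k. \<Sum>i\<le>k. a i * b (k - i)) sums (besselJ0 s * cosh (y * s))"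
    using Cauchy_product_sums[OF summable_norm_besselJ0_coeff[of s]] besselJ0_sums[of s]
    by (simp add: a_def sums_iff)
  moreover have "(\<Sum>i\<le>k. a i * b (k - i)) = (if even k then bessel_kernel_poly k y * s^k else 0)" for k
  proof -
    have "a i * b (k - i) = (if even k then besselJ0_coeff i * y^(k - i) / fact (k - i) * s^k else 0)"
      if "i \<le> k" for i
    proof (cases "even i")
      case True
      with that have "even (k - i) \<longleftrightarrow> even k" by auto
      moreover have "s^i * (y * s)^(k - i) = y^(k - i) * s^k"
        using that by (simp add: power_mult_distrib mult_ac flip: power_add)
      ultimately show ?thesis by (simp add: a_def b_def)
    qed (simp add: a_def besselJ0_coeff_odd)
    then show ?thesis
      by (cases "even k") (auto simp: bessel_kernel_poly_def sum_distrib_right intro!: sum.neutral)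
  qed
  ultimately have "(\<lambda>k. if even k then bessel_kernel_poly k y * s^k else 0) sums (besselJ0 s * cosh (y * s))"
    by simp
  then show ?thesis
    using sums_even_iff[of "\<lambda>k. if even k then bessel_kernel_poly k y * s^k else 0"] by simp
qed

(* By the derivative formula below, bessel_kernel k is (-1)^k / (k!)^2 times the k-th derivative
  of (1 + y^2) powr (-1/2). *)
definition bessel_kernel :: "nat \<Rightarrow> real \<Rightarrow> real" where
  "bessel_kernel k y = bessel_kernel_poly k y * (1 + y^2) powr (- real k - 1/2)"

lemma bessel_kernel_0: "bessel_kernel 0 y = (1 + y^2) powr (-1/2)"
  by (simp add: bessel_kernel_def)

lemma has_real_derivative_bessel_kernel:
  "(bessel_kernel k has_real_derivative - ((real k + 1)^2 * bessel_kernel (Suc k) y)) (at y)"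
proof -
  define A where "A = 1 + y^2"
  define e where "e = - real k - 1/2"
  have "A > 0" unfolding A_def by (rule one_plus_square_pos)
  obtain d where d: "(bessel_kernel_poly k has_real_derivative d) (at y)"
    and rec: "A * d - (2 * real k + 1) * y * bessel_kernel_poly k y = - ((real k + 1)^2 * bessel_kernel_poly (Suc k) y)"
  proof (cases k)
    case 0
    have "bessel_kernel_poly 0 = (\<lambda>_. 1)" by auto
    then show ?thesis using that[of 0] 0 by (simp add: bessel_kernel_poly_1)
  next
    case (Suc m)
    show ?thesis
      using has_real_derivative_bessel_kernel_poly_Suc[of m y] bessel_kernel_poly_Suc_Suc[of m y]
      by (intro that[of "bessel_kernel_poly m y"]) (simp_all add: Suc A_def algebra_simps)
  qed
  have "((\<lambda>y. (1 + y^2) powr e) has_real_derivative e * A powr (e - of_nat 1) * (2 * y)) (at y)"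
    unfolding A_def by (rule DERIV_fun_powr) (auto intro!: derivative_eq_intros one_plus_square_pos)
  from DERIV_mult[OF d this]
  have "(bessel_kernel k has_real_derivative d * A powr e + e * A powr (e - 1) * (2 * y) * bessel_kernel_poly k y) (at y)"
    unfolding bessel_kernel_def[abs_def] e_def A_def by simp
  moreover have "d * A powr e + e * A powr (e - 1) * (2 * y) * bessel_kernel_poly k y =
      A powr (e - 1) * (A * d - (2 * real k + 1) * y * bessel_kernel_poly k y)"
  proof -
    have "A powr e = A powr (e - 1) * A" using \<open>A > 0\<close> by (simp add: powr_diff)
    then show ?thesis by (simp add: e_def algebra_simps)
  qed
  moreover have "bessel_kernel (Suc k) y = bessel_kernel_poly (Suc k) y * A powr (e - 1)"
    by (simp add: bessel_kernel_def A_def e_def algebra_simps)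
  ultimately show ?thesis unfolding rec by (simp add: mult_ac)
qed

lemma continuous_on_bessel_kernel: "continuous_on S (bessel_kernel k)"
  by (rule DERIV_continuous_on[OF has_field_derivative_at_within[OF has_real_derivative_bessel_kernel]])

lemma sum_inverse_fact_mult_fact: "(\<Sum>i\<le>k. 1 / (fact i * fact (k - i))) = (2::real)^k / fact k"
proof -
  have "(\<Sum>i\<le>k. 1 / (fact i * fact (k - i)) :: real) = (\<Sum>i\<le>k. real (k choose i)) / fact k"
    by (simp add: binomial_fact sum_divide_distrib)
  also have "\<dots> = 2^k / fact k"
    by (simp flip: of_nat_sum add: choose_row_sum)
  finally show ?thesis .
qed

lemma abs_bessel_kernel_poly_le: "\<bar>bessel_kernel_poly k y\<bar> \<le> 2^k / fact k * (1 + y^2) powr (real k / 2)"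
proof -
  define A where "A = 1 + y^2"
  have "A \<ge> 1" by (simp add: A_def)
  have pow: "\<bar>y\<bar>^n \<le> A powr (real k / 2)" if "n \<le> k" for n
  proof -
    have "\<bar>y\<bar> \<le> A powr (1/2)"
      unfolding A_def by (simp add: powr_half_sqrt real_le_rsqrt)
    then have "\<bar>y\<bar>^n \<le> (A powr (1/2))^n" by (rule power_mono) simp
    also have "\<dots> = A powr (real n / 2)" using \<open>A \<ge> 1\<close> by (simp add: powr_power)
    also have "\<dots> \<le> A powr (real k / 2)" using \<open>A \<ge> 1\<close> that by (intro powr_mono) auto
    finally show ?thesis .
  qed
  have "\<bar>bessel_kernel_poly k y\<bar> \<le> (\<Sum>i\<le>k. \<bar>besselJ0_coeff i\<bar> / fact (k - i) * \<bar>y\<bar>^(k - i))"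
    unfolding bessel_kernel_poly_def by (rule order_trans[OF sum_abs]) (simp add: abs_mult power_abs)
  also have "\<dots> \<le> (\<Sum>i\<le>k. 1 / (fact i * fact (k - i)) * A powr (real k / 2))"
  proof (intro sum_mono mult_mono)
    show "\<bar>besselJ0_coeff i\<bar> / fact (k - i) \<le> 1 / (fact i * fact (k - i))" for i
      using abs_besselJ0_coeff_le[of i] by (simp add: divide_right_mono field_simps)
  qed (auto intro: pow)
  also have "\<dots> = 2^k / fact k * A powr (real k / 2)"
    by (simp only: sum_distrib_right[symmetric] sum_inverse_fact_mult_fact)
  finally show ?thesis unfolding A_def .
qed

lemma abs_bessel_kernel_le:
  assumes "- (real k + 1) / 2 \<le> e"
  shows "\<bar>bessel_kernel k y\<bar> \<le> 2^k / fact k * (1 + y^2) powr e"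
proof -
  define A where "A = 1 + y^2"
  have "A \<ge> 1" by (simp add: A_def)
  have "\<bar>bessel_kernel k y\<bar> = \<bar>bessel_kernel_poly k y\<bar> * A powr (- real k - 1/2)"
    by (simp add: bessel_kernel_def A_def abs_mult)
  also have "\<dots> \<le> 2^k / fact k * A powr (real k / 2) * A powr (- real k - 1/2)"
    unfolding A_def by (intro mult_right_mono abs_bessel_kernel_poly_le) simp
  also have "\<dots> = 2^k / fact k * A powr (- (real k + 1) / 2)"
  proof -
    have "real k / 2 + (- real k - 1/2) = - (real k + 1) / 2" by (simp add: field_simps)
    then show ?thesis by (simp only: mult.assoc powr_add[symmetric])
  qed
  also have "\<dots> \<le> 2^k / fact k * A powr e"
    using \<open>A \<ge> 1\<close> assms by (intro mult_left_mono powr_mono) auto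
  finally show ?thesis unfolding A_def .
qed

lemma abs_bessel_kernel_le_inverse:
  assumes "k \<ge> 1"
  shows "\<bar>bessel_kernel k y\<bar> \<le> 2^k / fact k / (1 + y^2)"
  using abs_bessel_kernel_le[of k "-1" y] assms one_plus_square_pos[of y] by (simp add: powr_neg_one)

lemma bessel_kernel_sums:
  "(\<lambda>j. c^(2 * j) * bessel_kernel (2 * j) y) sums
     ((1 + y^2) powr (-1/2) * besselJ0 (c / (1 + y^2)) * cosh (c * y / (1 + y^2)))"
proof -
  define A where "A = 1 + y^2"
  have "A > 0" unfolding A_def by (rule one_plus_square_pos)
  have "A powr (-1/2) * (bessel_kernel_poly (2 * j) y * (c / A)^(2 * j)) = c^(2 * j) * bessel_kernel (2 * j) y" for j
  proof -
    have "A powr (- real (2 * j) - 1/2) = A powr (-1/2 - real (2 * j))"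
      by (rule arg_cong[where f = "\<lambda>x. A powr x"]) simp
    also have "\<dots> = A powr (-1/2) / A^(2 * j)"
      using \<open>A > 0\<close> by (simp only: powr_diff powr_realpow)
    finally show ?thesis by (simp add: bessel_kernel_def A_def power_divide mult_ac)
  qed
  then have "(\<lambda>j. c^(2 * j) * bessel_kernel (2 * j) y) sums (A powr (-1/2) * (besselJ0 (c / A) * cosh (y * (c / A))))"
    using sums_mult[OF besselJ0_mult_cosh_sums[of y "c / A"], of "A powr (-1/2)"] by simp
  then show ?thesis by (simp add: A_def mult_ac)
qed

section \<open>Cosine transforms of the kernels\<close>

definition cos_bessel_kernel_antideriv :: "real \<Rightarrow> nat \<Rightarrow> real \<Rightarrow> real" where
  "cos_bessel_kernel_antideriv t k y = t * sin (t * y) * bessel_kernel k y - (real k + 1)^2 * cos (t * y) * bessel_kernel (Suc k) y"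

lemma has_real_derivative_cos_bessel_kernel_antideriv:
  "(cos_bessel_kernel_antideriv t k has_real_derivative
     cos (t * y) * ((real k + 1)^2 * (real k + 2)^2 * bessel_kernel (Suc (Suc k)) y + t^2 * bessel_kernel k y)) (at y)"
  unfolding cos_bessel_kernel_antideriv_def[abs_def]
  by (auto intro!: derivative_eq_intros has_real_derivative_bessel_kernel simp: algebra_simps power2_eq_square)

lemma tendsto_cos_bessel_kernel_antideriv: "(cos_bessel_kernel_antideriv t k \<longlongrightarrow> 0) at_top"
proof (rule Lim_null_comparison)
  define C where "C = \<bar>t\<bar> * (2^k / fact k) + (real k + 1)^2 * (2^Suc k / fact (Suc k))"
  show "((\<lambda>y. C * (1 + y^2) powr (-1/2)) \<longlongrightarrow> 0) at_top"
    by (rule tendsto_mult_right_zero) real_asymp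
  have "norm (cos_bessel_kernel_antideriv t k y) \<le> C * (1 + y^2) powr (-1/2)" for y
  proof -
    have bounded_factor: "\<bar>a * u * b\<bar> \<le> \<bar>a\<bar> * \<bar>b\<bar>" if "\<bar>u\<bar> \<le> 1" for a u b :: real
      using mult_left_le[OF that, of "\<bar>a\<bar> * \<bar>b\<bar>"] by (simp add: abs_mult mult_ac)
    have "norm (cos_bessel_kernel_antideriv t k y) \<le> \<bar>t\<bar> * \<bar>bessel_kernel k y\<bar> + (real k + 1)^2 * \<bar>bessel_kernel (Suc k) y\<bar>"
      unfolding cos_bessel_kernel_antideriv_def real_norm_def
      by (rule order_trans[OF abs_triangle_ineq4 add_mono]) (auto intro!: order_trans[OF bounded_factor])
    also have "\<dots> \<le> C * (1 + y^2) powr (-1/2)"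
      unfolding C_def distrib_right mult.assoc
      by (intro add_mono mult_left_mono abs_bessel_kernel_le) auto
    finally show ?thesis .
  qed
  then show "\<forall>\<^sub>F y in at_top. norm (cos_bessel_kernel_antideriv t k y) \<le> C * (1 + y^2) powr (-1/2)"
    by (intro always_eventually allI)
qed

lemma cos_bessel_kernel_antideriv_at_0: "even k \<Longrightarrow> cos_bessel_kernel_antideriv t k 0 = 0"
  by (simp add: cos_bessel_kernel_antideriv_def bessel_kernel_def bessel_kernel_poly_at_0 besselJ0_coeff_odd)

lemma has_integral_cos_bessel_kernel_Suc_Suc:
  assumes "even k" and L: "((\<lambda>y. cos (t * y) * bessel_kernel k y) has_integral L) {0..}"
  shows "((\<lambda>y. cos (t * y) * bessel_kernel (Suc (Suc k)) y) has_integral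
           - (t^2 * L) / ((real k + 1)^2 * (real k + 2)^2)) {0..}"
proof -
  define c where "c = (real k + 1)^2 * (real k + 2)^2"
  define F where "F = cos_bessel_kernel_antideriv t k"
  define I where "I n B = integral {0..B} (\<lambda>y. cos (t * y) * bessel_kernel n y)" for n B
  have "c > 0" unfolding c_def by simp
  have int: "(\<lambda>y. cos (t * y) * bessel_kernel n y) integrable_on {0..B}" for n B
    by (intro integrable_continuous_interval continuous_intros continuous_on_bessel_kernel)
  have step: "(F B - t^2 * I k B) / c = I (Suc (Suc k)) B" if "B \<ge> 0" for B
  proof -
    have "((\<lambda>y. cos (t * y) * (c * bessel_kernel (Suc (Suc k)) y + t^2 * bessel_kernel k y))
        has_integral F B - F 0) {0..B}"
      unfolding F_def c_def using that
      by (intro fundamental_theorem_of_calculus_real has_real_derivative_cos_bessel_kernel_antideriv)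
    moreover have "((\<lambda>y. cos (t * y) * (c * bessel_kernel (Suc (Suc k)) y + t^2 * bessel_kernel k y))
        has_integral c * I (Suc (Suc k)) B + t^2 * I k B) {0..B}"
    proof -
      have "((\<lambda>y. c * (cos (t * y) * bessel_kernel (Suc (Suc k)) y) + t^2 * (cos (t * y) * bessel_kernel k y))
          has_integral c * I (Suc (Suc k)) B + t^2 * I k B) {0..B}"
        unfolding I_def by (intro has_integral_add has_integral_mult_right integrable_integral int)
      then show ?thesis by (simp add: algebra_simps)
    qed
    ultimately have "c * I (Suc (Suc k)) B + t^2 * I k B = F B - F 0"
      by (rule has_integral_unique[rotated])
    then show ?thesis
      using \<open>c > 0\<close> cos_bessel_kernel_antideriv_at_0[OF \<open>even k\<close>] by (simp add: F_def field_simps)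
  qed
  have "((\<lambda>B. (F B - t^2 * I k B) / c) \<longlongrightarrow> (0 - t^2 * L) / c) at_top"
    using L unfolding has_integral_atLeast_iff_tendsto[OF int] F_def I_def
    by (intro tendsto_intros tendsto_cos_bessel_kernel_antideriv) (use \<open>c > 0\<close> in auto)
  moreover have "\<forall>\<^sub>F B in at_top. (F B - t^2 * I k B) / c = I (Suc (Suc k)) B"
    using eventually_ge_at_top[of 0] by (rule eventually_mono) (rule step)
  ultimately have "(I (Suc (Suc k)) \<longlongrightarrow> (0 - t^2 * L) / c) at_top"
    by (rule Lim_transform_eventually)
  then show ?thesis
    unfolding has_integral_atLeast_iff_tendsto[OF int] I_def c_def by simp
qed

lemma has_integral_cos_bessel_kernel_even:
  assumes "t > 0"
  shows "((\<lambda>y. cos (t * y) * bessel_kernel (2 * j) y) has_integral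
           (-1)^j * t^(2 * j) / (fact (2 * j))^2 * besselK0 t) {0..}"
proof (induction j)
  case 0
  then show ?case using has_integral_cos_mult_powr_besselK0[OF assms] by (simp add: bessel_kernel_0)
next
  case (Suc j)
  have field_identity: "- (t^2 * (s * T / x^2 * K)) / (a^2 * b^2) = -1 * s * (t^2 * T) / (a * b * x)^2 * K"
    if "a \<noteq> 0" "b \<noteq> 0" "x \<noteq> 0" for a b x s T K :: real
    using that by (simp add: power_mult_distrib field_simps)
  have fact_eq: "fact (2 * Suc j) = (real (2 * j) + 1) * (real (2 * j) + 2) * (fact (2 * j) :: real)"
    by (simp add: fact_Suc algebra_simps)
  have power_eq: "t^(2 * Suc j) = t^2 * t^(2 * j)"
    by (simp add: power_add[symmetric])
  have value_eq: "- (t^2 * ((-1)^j * t^(2 * j) / (fact (2 * j))^2 * besselK0 t)) /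
      ((real (2 * j) + 1)^2 * (real (2 * j) + 2)^2) = (-1)^Suc j * t^(2 * Suc j) / (fact (2 * Suc j))^2 * besselK0 t"
    unfolding fact_eq power_eq power_Suc by (intro field_identity) simp_all
  have index_eq: "Suc (Suc (2 * j)) = 2 * Suc j" by simp
  have "((\<lambda>y. cos (t * y) * bessel_kernel (Suc (Suc (2 * j))) y) has_integral
      - (t^2 * ((-1)^j * t^(2 * j) / (fact (2 * j))^2 * besselK0 t)) /
        ((real (2 * j) + 1)^2 * (real (2 * j) + 2)^2)) {0..}"
    by (rule has_integral_cos_bessel_kernel_Suc_Suc[OF _ Suc.IH]) simp
  then show ?case unfolding value_eq index_eq .
qed

section \<open>Termwise integration\<close>

lemma has_integral_besselJ0_cosh_cos:
  fixes c t :: real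
  assumes "c \<ge> 0" and "t > 0"
  shows "((\<lambda>y. (1 + y^2) powr (-1/2) * besselJ0 (c / (1 + y^2)) * cosh (c * y / (1 + y^2)) * cos (t * y))
          has_integral besselK0 t * ber (2 * sqrt (c * t))) {0..}"
proof -
  define G where "G y = (1 + y^2) powr (-1/2) * besselJ0 (c / (1 + y^2)) * cosh (c * y / (1 + y^2))" for y
  define f where "f j y = c^(2 * Suc j) * (cos (t * y) * bessel_kernel (2 * Suc j) y)" for j y
  define I where "I j = c^(2 * j) * ((-1)^j * t^(2 * j) / (fact (2 * j))^2 * besselK0 t)" for j
  define b where "b j = (2 * c)^(2 * Suc j) / fact (2 * Suc j)" for j
  have "I sums (besselK0 t * ber (2 * sqrt (c * t)))"
    using sums_mult[OF ber_two_sqrt_sums[of "c * t"], of "besselK0 t"] assms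
    by (simp add: I_def[abs_def] power_mult_distrib mult_ac)
  then have "(\<lambda>j. I (Suc j)) sums (besselK0 t * ber (2 * sqrt (c * t)) - besselK0 t)"
    by (subst sums_Suc_iff) (simp add: I_def)
  then have "((\<lambda>y. (G y - (1 + y^2) powr (-1/2)) * cos (t * y)) has_integral
      besselK0 t * ber (2 * sqrt (c * t)) - besselK0 t) {0..}"
  proof (rule has_integral_sums_dominated[where f = f and b = b and h = "\<lambda>y. 1 / (1 + y^2)", rotated -1])
    show "(f j has_integral I (Suc j)) {0..}" for j
      unfolding f_def I_def by (intro has_integral_mult_right has_integral_cos_bessel_kernel_even assms(2))
    show "(\<lambda>y::real. 1 / (1 + y^2)) integrable_on {0..}"
      using has_integral_inverse_one_plus_square by (rule has_integral_integrable)
    show "summable b"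
      using cosh_even_sums[of "2 * c"] unfolding b_def by (subst summable_Suc_iff) (rule sums_summable)
    show "0 \<le> b j" "0 \<le> 1 / (1 + y^2)" for j and y :: real
      using assms(1) by (simp_all add: b_def)
    show "norm (f j y) \<le> b j * (1 / (1 + y^2))" for j y
    proof -
      have "norm (f j y) = c^(2 * Suc j) * (\<bar>cos (t * y)\<bar> * \<bar>bessel_kernel (2 * Suc j) y\<bar>)"
        using assms(1) by (simp add: f_def abs_mult)
      also have "\<dots> \<le> c^(2 * Suc j) * (1 * (2^(2 * Suc j) / fact (2 * Suc j) / (1 + y^2)))"
        using assms(1) by (intro mult_left_mono mult_mono abs_bessel_kernel_le_inverse) auto
      also have "\<dots> = b j * (1 / (1 + y^2))"
        by (simp add: b_def power_mult_distrib)
      finally show ?thesis .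
    qed
    show "(\<lambda>j. f j y) sums ((G y - (1 + y^2) powr (-1/2)) * cos (t * y))" for y
      using sums_mult2[OF sums_split_initial_segment[OF bessel_kernel_sums[of c y], of 1], of "cos (t * y)"]
      by (simp add: f_def G_def bessel_kernel_0 mult_ac)
  qed
  from has_integral_add[OF this has_integral_cos_mult_powr_besselK0[OF assms(2)]]
  show ?thesis by (simp add: G_def algebra_simps)
qed

theorem mainTheorem7:
  fixes a t :: real
  assumes "t > 0"
  shows "((\<lambda>y. (1 + y^2) powr (-1/2) * besselJ0 ((1/4) * a^2 / (1 + y^2))
              * cosh ((1/4) * a^2 * y / (1 + y^2)) * cos (t * y))
          has_integral (besselK0 t * ber (a * sqrt t))) {0..}"
proof -
  have "2 * sqrt ((1/4) * a^2 * t) = \<bar>a\<bar> * sqrt t"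
    using assms by (simp add: real_sqrt_mult real_sqrt_divide)
  then have "ber (2 * sqrt ((1/4) * a^2 * t)) = ber (a * sqrt t)"
    using ber_abs[of "a * sqrt t"] assms by (simp add: abs_mult)
  then show ?thesis
    using has_integral_besselJ0_cosh_cos[of "(1/4) * a^2" t] assms by simp
qed

end
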